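(* Let $n\ge2$ and let $\phi_1(x),\dots,\phi_n(x)$ be (nonvanishing) functions of $x$. Let $J$ be the $(n+1)\times(n+1)$ matrix, indices $0,\dots,n$, with only nonzero entries $J_{k,n-k}=(-1)^k$. Put $f_0(x)=\big(\prod_{i=1}^n\phi_i(x)\big)^{-1/2}$ and $$F(x)=f_0(x)\big(1,\mathcal I(1),\mathcal I(1,2),\dots,\mathcal I(1,2,\dots,n)\big).$$ Let $s$ be the substitution $\phi_a\mapsto\phi_{n+1-a}$ ($1\le a\le n$), applied to any expression built from the $\phi_a$, their derivatives and iterated integrals of them (so $s\,\mathcal I(a_1\cdots a_m)=\mathcal I(n+1-a_1,\dots,n+1-a_m)$), componentwise on vectors. Then for integers $i,j\ge0$, $$F^{(i)}J(sF^{(j)})^T=0\ \text{ if } i+j<n,\qquad F^{(i)}J(sF^{(j)})^T=(-1)^i\ \text{ if } i+j=n.$$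
   Context: $F^{(i)}$ denotes the componentwise $i$-th derivative. Iterated integrals: $\mathcal I(a_1\cdots a_k)(x)=\int_0^x\phi_{a_1}(x_1)\,dx_1\int_0^{x_1}\phi_{a_2}(x_2)\,dx_2\cdots\int_0^{x_{k-1}}\phi_{a_k}(x_k)\,dx_k$ with $\mathcal I(\varnothing)=1$. *)

theory Defs
  imports "HOL-Analysis.Analysis"
begin

fun nderiv :: "nat \<Rightarrow> (real \<Rightarrow> complex) \<Rightarrow> real \<Rightarrow> complex" where
  "nderiv 0 f = f"
| "nderiv (Suc k) f = (\<lambda>x. vector_derivative (nderiv k f) (at x))"

definition oint :: "(real \<Rightarrow> complex) \<Rightarrow> real \<Rightarrow> complex" where
  "oint g x = (if 0 \<le> x then integral {0..x} g else - integral {x..0} g)"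

fun iint :: "(nat \<Rightarrow> real \<Rightarrow> complex) \<Rightarrow> nat list \<Rightarrow> real \<Rightarrow> complex" where
  "iint \<phi> [] x = 1"
| "iint \<phi> (a # as) x = oint (\<lambda>t. \<phi> a t * iint \<phi> as t) x"

definition Fvec :: "(nat \<Rightarrow> real \<Rightarrow> complex) \<Rightarrow> (real \<Rightarrow> complex) \<Rightarrow> nat \<Rightarrow> real \<Rightarrow> complex" where
  "Fvec \<phi> f0 k x = f0 x * iint \<phi> [1..<k+1] x"

definition Jmat :: "nat \<Rightarrow> nat \<Rightarrow> nat \<Rightarrow> complex" where
  "Jmat n k m = (if k + m = n then (-1) ^ k else 0)"

definition subst_s :: "nat \<Rightarrow> (nat \<Rightarrow> real \<Rightarrow> complex) \<Rightarrow> nat \<Rightarrow> real \<Rightarrow> complex" where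
  "subst_s n \<phi> a = \<phi> (n + 1 - a)"

definition Jform :: "nat \<Rightarrow> (nat \<Rightarrow> complex) \<Rightarrow> (nat \<Rightarrow> complex) \<Rightarrow> complex" where
  "Jform n u v = (\<Sum>k\<le>n. \<Sum>m\<le>n. u k * Jmat n k m * v m)"

end

theory Submission
  imports Defs
begin

text \<open>
  Write \<open>g_a = \<phi>_a\<close> and \<open>I(w)\<close> for the iterated integral of a word \<open>w\<close> in the \<open>g_a\<close>.
  Then \<open>F^(i) J (s F^(j))^T\<close> is
  \<open>c(i,j) = \<Sum>k. (-1)^k (f0 I(g_1...g_k))^(i) (f0 I(g_n...g_(k+1)))^(j)\<close>, and
  \<open>c(i,j)' = c(i+1,j) + c(i,j+1)\<close>; so by induction on \<open>j\<close> it suffices to know \<open>c(i,0)\<close>.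
  Differentiating \<open>f0 I(g_1...g_k)\<close> either differentiates the weight \<open>f0\<close> or moves \<open>g_1\<close>
  into the weight, shortening the word by one letter. After \<open>i < n\<close> derivatives every term is
  therefore a weighted instance of Chen's antipode identity
  \<open>\<Sum>k. (-1)^k I(g_1...g_k) I(g_m...g_(k+1)) = 0\<close> for \<open>m \<ge> 1\<close> (proved by differentiating it
  and evaluating at \<open>0\<close>), while after \<open>n\<close> derivatives only \<open>(-1)^n f0^2 g_1\<cdots>g_n = (-1)^n\<close>
  remains.
\<close>

definition smooth :: "(real \<Rightarrow> complex) \<Rightarrow> bool" where
  "smooth f \<longleftrightarrow> (\<forall>k x. (nderiv k f has_vector_derivative nderiv (Suc k) f x) (at x))"

lemma nderiv_Suc': "nderiv (Suc k) f = nderiv k (nderiv (Suc 0) f)"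
  by (induction k) auto

lemma nderiv_zero: "nderiv k (\<lambda>_. 0) = (\<lambda>_. 0)"
  by (induction k) auto

lemma smooth_iff_differentiable: "smooth f \<longleftrightarrow> (\<forall>k x. nderiv k f differentiable (at x))"
  unfolding smooth_def
  by (metis differentiableI_vector nderiv.simps(2) vector_derivative_works)

lemma nderiv_Suc_eq_nderiv_derivative:
  assumes "\<And>x. (f has_vector_derivative f' x) (at x)"
  shows "nderiv (Suc k) f = nderiv k f'"
proof -
  have "nderiv (Suc 0) f = f'"
    using assms by (auto simp: vector_derivative_at)
  then show ?thesis
    by (metis nderiv_Suc')
qed

lemma smooth_has_vector_derivative:
  "smooth f \<Longrightarrow> (f has_vector_derivative nderiv (Suc 0) f x) (at x)"
  unfolding smooth_def by (metis nderiv.simps(1))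

lemma smooth_nderiv: "smooth f \<Longrightarrow> smooth (nderiv (Suc 0) f)"
  unfolding smooth_def by (metis nderiv_Suc')

lemma smooth_imp_continuous_on: "smooth f \<Longrightarrow> continuous_on UNIV f"
  by (metis continuous_at_imp_continuous_on has_vector_derivative_continuous
      smooth_has_vector_derivative)

lemma smooth_if_derivative_smooth:
  assumes f': "\<And>x. (f has_vector_derivative f' x) (at x)" and "smooth f'"
  shows "smooth f"
  unfolding smooth_def
proof (intro allI)
  fix k x
  show "(nderiv k f has_vector_derivative nderiv (Suc k) f x) (at x)"
  proof (cases k)
    case 0
    then show ?thesis
      using f' nderiv_Suc_eq_nderiv_derivative[OF f', of 0] by simp
  next
    case (Suc k')
    then show ?thesis
      using \<open>smooth f'\<close> nderiv_Suc_eq_nderiv_derivative[OF f'] unfolding smooth_def by metis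
  qed
qed

lemma smooth_const: "smooth (\<lambda>_. c)"
  by (rule smooth_if_derivative_smooth[of _ "\<lambda>_. 0"]) (auto simp: smooth_def nderiv_zero)

lemma nderiv_add:
  assumes "\<And>j x. j < k \<Longrightarrow> nderiv j f differentiable (at x)"
    and "\<And>j x. j < k \<Longrightarrow> nderiv j g differentiable (at x)"
  shows "nderiv k (\<lambda>t. f t + g t) = (\<lambda>t. nderiv k f t + nderiv k g t)"
  using assms
proof (induction k)
  case 0
  then show ?case by simp
next
  case (Suc k)
  have IH: "nderiv k (\<lambda>t. f t + g t) = (\<lambda>t. nderiv k f t + nderiv k g t)"
    using Suc by auto
  show ?case
  proof
    fix x
    have "(nderiv k f has_vector_derivative nderiv (Suc k) f x) (at x)"
      "(nderiv k g has_vector_derivative nderiv (Suc k) g x) (at x)"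
      using Suc.prems[of k x] by (simp_all add: vector_derivative_works)
    then have "((\<lambda>t. nderiv k f t + nderiv k g t) has_vector_derivative
        nderiv (Suc k) f x + nderiv (Suc k) g x) (at x)"
      by (rule has_vector_derivative_add)
    then show "nderiv (Suc k) (\<lambda>t. f t + g t) x = nderiv (Suc k) f x + nderiv (Suc k) g x"
      by (simp only: nderiv.simps IH vector_derivative_at)
  qed
qed

lemma nderiv_mult_differentiable:
  assumes "smooth f" and "smooth g"
  shows "nderiv k (\<lambda>t. f t * g t) differentiable (at x)"
  using assms
proof (induction k arbitrary: f g x rule: less_induct)
  case (less k)
  show ?case
  proof (cases k)
    case 0
    have "f differentiable (at x)" "g differentiable (at x)"
      using less.prems by (metis smooth_iff_differentiable nderiv.simps(1))+
    then show ?thesis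
      using 0 by simp
  next
    case (Suc k')
    let ?f' = "nderiv (Suc 0) f" and ?g' = "nderiv (Suc 0) g"
    have sm: "smooth ?f'" "smooth ?g'"
      using less.prems smooth_nderiv by blast+
    have fg': "((\<lambda>t. f t * g t) has_vector_derivative ?f' y * g y + f y * ?g' y) (at y)" for y
      using has_vector_derivative_mult[OF smooth_has_vector_derivative smooth_has_vector_derivative,
          OF less.prems]
      by (simp add: algebra_simps)
    have "nderiv k (\<lambda>t. f t * g t) = nderiv k' (\<lambda>t. ?f' t * g t + f t * ?g' t)"
      unfolding Suc by (rule nderiv_Suc_eq_nderiv_derivative[OF fg'])
    also have "\<dots> = (\<lambda>t. nderiv k' (\<lambda>t. ?f' t * g t) t + nderiv k' (\<lambda>t. f t * ?g' t) t)"
      by (rule nderiv_add) (use Suc sm less.prems in \<open>auto intro!: less.IH\<close>)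
    finally have "nderiv k (\<lambda>t. f t * g t) =
        (\<lambda>t. nderiv k' (\<lambda>t. ?f' t * g t) t + nderiv k' (\<lambda>t. f t * ?g' t) t)" .
    moreover have "nderiv k' (\<lambda>t. ?f' t * g t) differentiable (at x)"
      "nderiv k' (\<lambda>t. f t * ?g' t) differentiable (at x)"
      using less.IH[of k'] Suc sm less.prems by blast+
    ultimately show ?thesis
      by (simp only:) (rule differentiable_add)
  qed
qed

lemma smooth_mult: "smooth f \<Longrightarrow> smooth g \<Longrightarrow> smooth (\<lambda>t. f t * g t)"
  by (simp add: smooth_iff_differentiable[of "\<lambda>t. f t * g t"] nderiv_mult_differentiable)

lemma oint_eq_integral_diff:
  assumes g: "continuous_on UNIV g" and "a \<le> 0" "a \<le> u"
  shows "oint g u = integral {a..u} g - integral {a..0} g"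
proof (cases "0 \<le> u")
  case True
  have "integral {a..0} g + integral {0..u} g = integral {a..u} g"
    by (rule Henstock_Kurzweil_Integration.integral_combine)
      (use assms True in \<open>auto intro: integrable_continuous_real continuous_on_subset[OF g]\<close>)
  then show ?thesis
    using True by (simp add: oint_def algebra_simps)
next
  case False
  have "integral {a..u} g + integral {u..0} g = integral {a..0} g"
    by (rule Henstock_Kurzweil_Integration.integral_combine)
      (use assms False in \<open>auto intro: integrable_continuous_real continuous_on_subset[OF g]\<close>)
  then show ?thesis
    using False by (simp add: oint_def algebra_simps)
qed

lemma has_vector_derivative_oint:
  assumes g: "continuous_on UNIV g"
  shows "(oint g has_vector_derivative g x) (at x)"
proof -
  define a where "a = min x 0 - 1"
  define b where "b = max x 0 + 1"
  have "((\<lambda>u. integral {a..u} g) has_vector_derivative g x) (at x within {a..b})"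
    by (rule integral_has_vector_derivative)
      (auto simp: a_def b_def intro: continuous_on_subset[OF g])
  then have "((\<lambda>u. integral {a..u} g - integral {a..0} g) has_vector_derivative g x - 0)
      (at x within {a..b})"
    by (intro has_vector_derivative_diff) auto
  then have "((\<lambda>u. integral {a..u} g - integral {a..0} g) has_vector_derivative g x)
      (at x within {a<..<b})"
    by (auto intro: has_vector_derivative_within_subset)
  then have "((\<lambda>u. integral {a..u} g - integral {a..0} g) has_vector_derivative g x) (at x)"
    by (subst (asm) at_within_open) (auto simp: a_def b_def)
  then show ?thesis
    by (rule has_vector_derivative_transform_within_open[where S = "{a<..<b}"])
      (auto simp: a_def b_def intro!: oint_eq_integral_diff[OF g, symmetric])
qed

lemma oint_0 [simp]: "oint g 0 = 0"
  by (simp add: oint_def)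

fun iter_int :: "(real \<Rightarrow> complex) list \<Rightarrow> real \<Rightarrow> complex" where
  "iter_int [] x = 1"
| "iter_int (g # gs) x = oint (\<lambda>t. g t * iter_int gs t) x"

definition iter_int_deriv :: "(real \<Rightarrow> complex) list \<Rightarrow> real \<Rightarrow> complex" where
  "iter_int_deriv gs x = (case gs of [] \<Rightarrow> 0 | g # gs' \<Rightarrow> g x * iter_int gs' x)"

lemma iter_int_deriv_simps [simp]:
  "iter_int_deriv [] x = 0"
  "iter_int_deriv (g # gs) x = g x * iter_int gs x"
  by (simp_all add: iter_int_deriv_def)

lemma iint_eq_iter_int: "iint \<phi> as = iter_int (map \<phi> as)"
  by (induction as) (auto simp: fun_eq_iff)

lemma iter_int_at_0: "gs \<noteq> [] \<Longrightarrow> iter_int gs 0 = 0"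
  by (cases gs) auto

lemma smooth_iter_int: "\<forall>g\<in>set gs. smooth g \<Longrightarrow> smooth (iter_int gs)"
proof (induction gs)
  case Nil
  have "iter_int [] = (\<lambda>_. 1)"
    by auto
  then show ?case
    using smooth_const by simp
next
  case (Cons g gs)
  have s: "smooth (\<lambda>t. g t * iter_int gs t)"
    using Cons by (auto intro!: smooth_mult)
  have "iter_int (g # gs) = oint (\<lambda>t. g t * iter_int gs t)"
    by auto
  then show ?case
    using smooth_if_derivative_smooth[OF has_vector_derivative_oint[OF smooth_imp_continuous_on[OF s]] s]
    by simp
qed

lemma smooth_iter_int_deriv: "\<forall>g\<in>set gs. smooth g \<Longrightarrow> smooth (iter_int_deriv gs)"
proof (cases gs)
  case Nil
  have "iter_int_deriv [] = (\<lambda>_. 0)"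
    by auto
  then show ?thesis
    using Nil smooth_const by simp
next
  case (Cons g gs')
  assume "\<forall>g\<in>set gs. smooth g"
  then have "smooth (\<lambda>t. g t * iter_int gs' t)"
    using Cons by (auto intro!: smooth_mult smooth_iter_int)
  moreover have "iter_int_deriv (g # gs') = (\<lambda>t. g t * iter_int gs' t)"
    by auto
  ultimately show ?thesis
    using Cons by simp
qed

lemma has_vector_derivative_iter_int:
  assumes "\<forall>g\<in>set gs. smooth g"
  shows "(iter_int gs has_vector_derivative iter_int_deriv gs x) (at x)"
proof (cases gs)
  case Nil
  have "iter_int [] = (\<lambda>_. 1)"
    by auto
  then show ?thesis
    using Nil by simp
next
  case (Cons g gs')
  have s: "smooth (\<lambda>t. g t * iter_int gs' t)"
    using assms Cons by (auto intro!: smooth_mult smooth_iter_int)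
  have "iter_int (g # gs') = oint (\<lambda>t. g t * iter_int gs' t)"
    by auto
  then show ?thesis
    using has_vector_derivative_oint[OF smooth_imp_continuous_on[OF s]] Cons by simp
qed

definition antipode_sum :: "(real \<Rightarrow> complex) list \<Rightarrow> real \<Rightarrow> complex" where
  "antipode_sum gs x =
     (\<Sum>k\<le>length gs. (-1)^k * iter_int (take k gs) x * iter_int (rev (drop k gs)) x)"

lemma antipode_sum_Nil [simp]: "antipode_sum [] x = 1"
  by (simp add: antipode_sum_def)

lemma antipode_sum_at_0:
  assumes "gs \<noteq> []"
  shows "antipode_sum gs 0 = 0"
  unfolding antipode_sum_def
proof (intro sum.neutral ballI)
  fix k
  assume "k \<in> {..length gs}"
  then show "(-1)^k * iter_int (take k gs) 0 * iter_int (rev (drop k gs)) 0 = 0"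
    using assms by (cases k) (auto simp: iter_int_at_0)
qed

lemma sum_iter_int_deriv_take:
  "(\<Sum>k\<le>length (p # qs). (-1)^k *
      (iter_int_deriv (take k (p # qs)) y * iter_int (rev (drop k (p # qs))) y))
    = - p y * antipode_sum qs y"
proof -
  have "(\<Sum>k\<le>length (p # qs). (-1)^k *
      (iter_int_deriv (take k (p # qs)) y * iter_int (rev (drop k (p # qs))) y))
    = (\<Sum>k\<le>length qs. - p y * ((-1)^k * iter_int (take k qs) y * iter_int (rev (drop k qs)) y))"
    by (simp only: length_Cons sum.atMost_Suc_shift) (simp add: algebra_simps)
  then show ?thesis
    by (simp add: antipode_sum_def sum_distrib_left)
qed

lemma sum_iter_int_deriv_drop:
  "(\<Sum>k\<le>length (bs @ [z]). (-1)^k *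
      (iter_int (take k (bs @ [z])) y * iter_int_deriv (rev (drop k (bs @ [z]))) y))
    = z y * antipode_sum bs y"
proof -
  have "(\<Sum>k\<le>length (bs @ [z]). (-1)^k *
      (iter_int (take k (bs @ [z])) y * iter_int_deriv (rev (drop k (bs @ [z]))) y))
    = (\<Sum>k\<le>length bs. (-1)^k *
      (iter_int (take k (bs @ [z])) y * iter_int_deriv (rev (drop k (bs @ [z]))) y))"
    by simp
  also have "\<dots> = (\<Sum>k\<le>length bs. z y * ((-1)^k * iter_int (take k bs) y * iter_int (rev (drop k bs)) y))"
    by (intro sum.cong refl) auto
  finally show ?thesis
    by (simp add: antipode_sum_def sum_distrib_left)
qed

lemma has_vector_derivative_antipode_sum:
  assumes "\<forall>g\<in>set gs. smooth g" and "gs \<noteq> []"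
  shows "(antipode_sum gs has_vector_derivative
      last gs x * antipode_sum (butlast gs) x - hd gs x * antipode_sum (tl gs) x) (at x)"
proof -
  have "((\<lambda>y. (-1)^k * iter_int (take k gs) y * iter_int (rev (drop k gs)) y) has_vector_derivative
      (-1)^k * (iter_int_deriv (take k gs) x * iter_int (rev (drop k gs)) x)
      + (-1)^k * (iter_int (take k gs) x * iter_int_deriv (rev (drop k gs)) x)) (at x)" for k
  proof -
    have "((\<lambda>y. (-1)^k * iter_int (take k gs) y * iter_int (rev (drop k gs)) y) has_vector_derivative
        ((-1)^k * iter_int (take k gs) x) * iter_int_deriv (rev (drop k gs)) x
        + ((-1)^k * iter_int_deriv (take k gs) x + 0 * iter_int (take k gs) x)
          * iter_int (rev (drop k gs)) x) (at x)"
      by (intro has_vector_derivative_mult has_vector_derivative_const has_vector_derivative_iter_int)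
        (use assms(1) in \<open>auto dest: in_set_takeD in_set_dropD\<close>)
    then show ?thesis
      by (simp add: algebra_simps)
  qed
  then have "(antipode_sum gs has_vector_derivative
      (\<Sum>k\<le>length gs. (-1)^k * (iter_int_deriv (take k gs) x * iter_int (rev (drop k gs)) x))
      + (\<Sum>k\<le>length gs. (-1)^k * (iter_int (take k gs) x * iter_int_deriv (rev (drop k gs)) x)))
      (at x)"
    unfolding antipode_sum_def[abs_def] sum.distrib[symmetric] by (rule has_vector_derivative_sum)
  moreover obtain p qs where "gs = p # qs"
    using assms(2) by (cases gs) auto
  then have "(\<Sum>k\<le>length gs. (-1)^k * (iter_int_deriv (take k gs) x * iter_int (rev (drop k gs)) x))
      = - hd gs x * antipode_sum (tl gs) x"
    using sum_iter_int_deriv_take by simp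
  moreover obtain bs z where "gs = bs @ [z]"
    using assms(2) by (cases gs rule: rev_cases) auto
  then have "(\<Sum>k\<le>length gs. (-1)^k * (iter_int (take k gs) x * iter_int_deriv (rev (drop k gs)) x))
      = last gs x * antipode_sum (butlast gs) x"
    using sum_iter_int_deriv_drop by simp
  ultimately show ?thesis
    by (simp add: algebra_simps)
qed

lemma antipode_sum_eq_0:
  assumes "\<forall>g\<in>set gs. smooth g" and "gs \<noteq> []"
  shows "antipode_sum gs x = 0"
  using assms
proof (induction "length gs" arbitrary: gs x rule: less_induct)
  case less
  have D: "(antipode_sum gs has_vector_derivative 0) (at y within UNIV)" for y
  proof (cases "length gs = 1")
    case True
    then obtain p where "gs = [p]"
      by (cases gs) auto
    then show ?thesis
      using has_vector_derivative_antipode_sum[OF less.prems, of y] by simp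
  next
    case False
    then have "butlast gs \<noteq> []" "tl gs \<noteq> []"
      using less.prems(2) by (cases gs; simp)+
    moreover have "\<forall>g\<in>set (butlast gs). smooth g" "\<forall>g\<in>set (tl gs). smooth g"
      using less.prems by (auto dest: in_set_butlastD list.set_sel(2)[rotated])
    ultimately have "antipode_sum (butlast gs) y = 0" "antipode_sum (tl gs) y = 0"
      using less.hyps[of "butlast gs"] less.hyps[of "tl gs"] less.prems(2) by auto
    then show ?thesis
      using has_vector_derivative_antipode_sum[OF less.prems, of y] by simp
  qed
  obtain c where "\<And>y. y \<in> UNIV \<Longrightarrow> antipode_sum gs y = c"
    using has_vector_derivative_zero_constant[OF convex_UNIV D] by blast
  then show ?case
    using antipode_sum_at_0[OF less.prems(2)] by simp
qed

definition antipode_pairing ::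
  "(real \<Rightarrow> complex) \<Rightarrow> (real \<Rightarrow> complex) \<Rightarrow> (real \<Rightarrow> complex) list \<Rightarrow> nat \<Rightarrow> nat \<Rightarrow> real \<Rightarrow> complex"
where
  "antipode_pairing a b gs i j x =
     (\<Sum>k\<le>length gs. (-1)^k * nderiv i (\<lambda>t. a t * iter_int (take k gs) t) x
                              * nderiv j (\<lambda>t. b t * iter_int (rev (drop k gs)) t) x)"

lemma antipode_pairing_0_0: "antipode_pairing a b gs 0 0 x = a x * b x * antipode_sum gs x"
  by (simp add: antipode_pairing_def antipode_sum_def sum_distrib_left algebra_simps)

lemma antipode_pairing_Suc_left:
  assumes a: "smooth a" and sm: "\<forall>g\<in>set (p # qs). smooth g"
  shows "antipode_pairing a b (p # qs) (Suc i) j x =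
    antipode_pairing (nderiv (Suc 0) a) b (p # qs) i j x - antipode_pairing (\<lambda>t. a t * p t) b qs i j x"
proof -
  define gs where "gs = p # qs"
  define a' where "a' = nderiv (Suc 0) a"
  define R where "R k = nderiv j (\<lambda>t. b t * iter_int (rev (drop k gs)) t) x" for k
  have sm_take: "\<forall>g\<in>set (take k gs). smooth g" for k
    using sm unfolding gs_def by (metis in_set_takeD)
  have "nderiv (Suc i) (\<lambda>t. a t * iter_int (take k gs) t) =
      (\<lambda>y. nderiv i (\<lambda>t. a' t * iter_int (take k gs) t) y
         + nderiv i (\<lambda>t. a t * iter_int_deriv (take k gs) t) y)" for k
  proof -
    have d: "((\<lambda>t. a t * iter_int (take k gs) t) has_vector_derivative
        a' y * iter_int (take k gs) y + a y * iter_int_deriv (take k gs) y) (at y)" for y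
      using has_vector_derivative_mult[OF smooth_has_vector_derivative[OF a]
          has_vector_derivative_iter_int[OF sm_take]]
      by (simp add: a'_def algebra_simps)
    have "smooth (\<lambda>t. a' t * iter_int (take k gs) t)"
      "smooth (\<lambda>t. a t * iter_int_deriv (take k gs) t)"
      using a smooth_nderiv[OF a] sm_take unfolding a'_def[symmetric]
      by (auto intro!: smooth_mult smooth_iter_int smooth_iter_int_deriv)
    then show ?thesis
      unfolding nderiv_Suc_eq_nderiv_derivative[OF d]
      by (intro nderiv_add) (auto simp: smooth_iff_differentiable)
  qed
  then have "antipode_pairing a b gs (Suc i) j x = antipode_pairing a' b gs i j x +
      (\<Sum>k\<le>length gs. (-1)^k * nderiv i (\<lambda>t. a t * iter_int_deriv (take k gs) t) x * R k)"
    by (simp add: antipode_pairing_def R_def algebra_simps sum.distrib)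
  also have "(\<Sum>k\<le>length gs. (-1)^k * nderiv i (\<lambda>t. a t * iter_int_deriv (take k gs) t) x * R k)
     = (\<Sum>k\<le>length qs. (-1)^(Suc k) * nderiv i (\<lambda>t. a t * iter_int_deriv (take (Suc k) gs) t) x
          * R (Suc k))"
    by (simp only: gs_def length_Cons sum.atMost_Suc_shift) (simp add: nderiv_zero)
  also have "\<dots> = - antipode_pairing (\<lambda>t. a t * p t) b qs i j x"
    unfolding antipode_pairing_def sum_negf[symmetric]
    by (intro sum.cong refl) (simp add: gs_def R_def mult.assoc)
  finally show ?thesis
    by (simp add: gs_def a'_def)
qed

lemma antipode_pairing_i_0:
  assumes "smooth a" and "\<forall>g\<in>set gs. smooth g" and "i \<le> length gs"
  shows "antipode_pairing a b gs i 0 x =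
    (if i < length gs then 0 else (-1)^i * a x * b x * prod_list (map (\<lambda>g. g x) gs))"
  using assms
proof (induction i arbitrary: a gs)
  case 0
  then show ?case
    using antipode_sum_eq_0[of gs x] by (cases gs) (auto simp: antipode_pairing_0_0)
next
  case (Suc i)
  then obtain p qs where gs: "gs = p # qs"
    by (cases gs) auto
  have sm: "\<forall>g\<in>set (p # qs). smooth g" "smooth (\<lambda>t. a t * p t)"
    using Suc.prems gs by (auto intro: smooth_mult)
  have "antipode_pairing (nderiv (Suc 0) a) b (p # qs) i 0 x = 0"
    using Suc.IH[OF smooth_nderiv[OF Suc.prems(1)] sm(1)] Suc.prems(3) gs by simp
  moreover have "antipode_pairing (\<lambda>t. a t * p t) b qs i 0 x =
      (if i < length qs then 0 else (-1)^i * (a x * p x) * b x * prod_list (map (\<lambda>g. g x) qs))"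
    using Suc.IH[of "\<lambda>t. a t * p t" qs] Suc.prems sm gs by simp
  ultimately show ?case
    using Suc.prems(3) unfolding gs antipode_pairing_Suc_left[OF Suc.prems(1) sm(1)]
    by (auto simp: algebra_simps)
qed

lemma has_vector_derivative_antipode_pairing:
  assumes "smooth a" and "smooth b" and "\<forall>g\<in>set gs. smooth g"
  shows "(antipode_pairing a b gs i j has_vector_derivative
      antipode_pairing a b gs (Suc i) j x + antipode_pairing a b gs i (Suc j) x) (at x)"
proof -
  have "smooth (\<lambda>t. a t * iter_int (take k gs) t)" "smooth (\<lambda>t. b t * iter_int (rev (drop k gs)) t)" for k
    using assms by (auto intro!: smooth_mult smooth_iter_int dest!: in_set_takeD in_set_dropD)
  then have "(antipode_pairing a b gs i j has_vector_derivative
      (\<Sum>k\<le>length gs. ((-1)^k * nderiv i (\<lambda>t. a t * iter_int (take k gs) t) x)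
          * nderiv (Suc j) (\<lambda>t. b t * iter_int (rev (drop k gs)) t) x
        + ((-1)^k * nderiv (Suc i) (\<lambda>t. a t * iter_int (take k gs) t) x
          + 0 * nderiv i (\<lambda>t. a t * iter_int (take k gs) t) x)
          * nderiv j (\<lambda>t. b t * iter_int (rev (drop k gs)) t) x)) (at x)"
    unfolding antipode_pairing_def[abs_def]
    by (intro has_vector_derivative_sum has_vector_derivative_mult has_vector_derivative_const)
      (auto simp: smooth_def)
  then show ?thesis
    by (simp add: antipode_pairing_def sum.distrib[symmetric] algebra_simps)
qed

lemma antipode_pairing_eq:
  assumes "smooth a" and "smooth b" and "\<forall>g\<in>set gs. smooth g" and "i + j \<le> length gs"
  shows "antipode_pairing a b gs i j x =
    (if i + j < length gs then 0 else (-1)^i * a x * b x * prod_list (map (\<lambda>g. g x) gs))"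
  using assms(4)
proof (induction j arbitrary: i x)
  case 0
  then show ?case
    using antipode_pairing_i_0[OF assms(1,3)] by simp
next
  case (Suc j)
  have "antipode_pairing a b gs i j = (\<lambda>_. 0)"
    using Suc by auto
  then have "antipode_pairing a b gs (Suc i) j x + antipode_pairing a b gs i (Suc j) x = 0"
    using has_vector_derivative_antipode_pairing[OF assms(1-3), of i j x]
    by (metis has_vector_derivative_const vector_derivative_unique_at)
  moreover have "antipode_pairing a b gs (Suc i) j x =
      (if Suc i + j < length gs then 0 else (-1)^Suc i * a x * b x * prod_list (map (\<lambda>g. g x) gs))"
    using Suc by simp
  ultimately show ?case
    by (auto simp: eq_neg_iff_add_eq_0[symmetric])
qed

lemma Jform_eq_sum: "Jform n u v = (\<Sum>k\<le>n. (-1)^k * u k * v (n - k))"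
  unfolding Jform_def
proof (intro sum.cong refl)
  fix k
  assume "k \<in> {..n}"
  then have "(\<Sum>m\<le>n. u k * Jmat n k m * v m) = (\<Sum>m\<le>n. if m = n - k then u k * (-1)^k * v m else 0)"
    by (intro sum.cong refl) (auto simp: Jmat_def)
  then show "(\<Sum>m\<le>n. u k * Jmat n k m * v m) = (-1)^k * u k * v (n - k)"
    by simp
qed

lemma Fvec_eq: "k \<le> n \<Longrightarrow> Fvec \<phi> f0 k = (\<lambda>t. f0 t * iter_int (take k (map \<phi> [1..<n+1])) t)"
  by (auto simp: Fvec_def iint_eq_iter_int take_map min_absorb1 simp del: upt_Suc)

lemma Fvec_subst_s_eq:
  assumes "k \<le> n"
  shows "Fvec (subst_s n \<phi>) f0 (n - k) = (\<lambda>t. f0 t * iter_int (rev (drop k (map \<phi> [1..<n+1]))) t)"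
proof -
  have idx: "map (\<lambda>a. n + 1 - a) [1..<n - k + 1] = rev [k + 1..<n + 1]"
    using assms by (intro nth_equalityI) (auto simp: rev_nth nth_upt simp del: upt_Suc)
  have "map (subst_s n \<phi>) [1..<n - k + 1] = map \<phi> (map (\<lambda>a. n + 1 - a) [1..<n - k + 1])"
    by (simp add: subst_s_def)
  also have "\<dots> = rev (drop k (map \<phi> [1..<n+1]))"
    by (simp only: idx) (simp add: drop_map rev_map del: upt_Suc)
  finally show ?thesis
    by (simp add: Fvec_def iint_eq_iter_int fun_eq_iff del: upt_Suc)
qed

lemma Jform_Fvec_eq_antipode_pairing:
  "Jform n (\<lambda>k. nderiv i (Fvec \<phi> f0 k) x) (\<lambda>k. nderiv j (Fvec (subst_s n \<phi>) f0 k) x)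
    = antipode_pairing f0 f0 (map \<phi> [1..<n+1]) i j x"
  unfolding Jform_eq_sum antipode_pairing_def
  by (intro sum.cong) (simp_all add: Fvec_eq Fvec_subst_s_eq del: upt_Suc)

theorem proposition5p6:
  fixes n :: nat and \<phi> :: "nat \<Rightarrow> real \<Rightarrow> complex" and f0 :: "real \<Rightarrow> complex"
  assumes "n \<ge> 2"
    and nonvan: "\<And>a x. a \<in> {1..n} \<Longrightarrow> \<phi> a x \<noteq> 0"
    and smooth_phi: "\<And>a k x. a \<in> {1..n} \<Longrightarrow>
          (nderiv k (\<phi> a) has_vector_derivative nderiv (Suc k) (\<phi> a) x) (at x)"
    and f0_sq: "\<And>x. (f0 x)\<^sup>2 * (\<Prod>a=1..n. \<phi> a x) = 1"
    and smooth_f0: "\<And>k x. (nderiv k f0 has_vector_derivative nderiv (Suc k) f0 x) (at x)"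
  shows "\<forall>i j x.
     (i + j < n \<longrightarrow>
        Jform n (\<lambda>k. nderiv i (Fvec \<phi> f0 k) x)
                (\<lambda>k. nderiv j (Fvec (subst_s n \<phi>) f0 k) x) = 0) \<and>
     (i + j = n \<longrightarrow>
        Jform n (\<lambda>k. nderiv i (Fvec \<phi> f0 k) x)
                (\<lambda>k. nderiv j (Fvec (subst_s n \<phi>) f0 k) x) = (-1) ^ i)"
proof -
  define gs where "gs = map \<phi> [1..<n+1]"
  have "smooth f0" "\<forall>g\<in>set gs. smooth g" "length gs = n"
    using smooth_f0 smooth_phi by (auto simp: smooth_def gs_def)
  moreover have "f0 x * f0 x * prod_list (map (\<lambda>g. g x) gs) = 1" for x
    using f0_sq[of x] by (simp add: gs_def prod.distinct_set_conv_list[symmetric] power2_eq_square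
        atLeastLessThanSuc_atLeastAtMost del: upt_Suc)
  ultimately have "antipode_pairing f0 f0 gs i j x = (if i + j < n then 0 else (-1)^i)"
    if "i + j \<le> n" for i j x
    using antipode_pairing_eq[of f0 f0 gs i j x] that by (simp add: mult.assoc)
  then show ?thesis
    unfolding Jform_Fvec_eq_antipode_pairing gs_def[symmetric] by simp
qed

end
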